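(* Let $n\ge2$ and $k=n$. Then the nerve of the category $\pi^{-1}(\{n-1,n\})\cap V_+\pi^{-1}(\{0,\dots,n-2\})$ is weakly contractible.
   Context: $c\mathrm{Sd}^2\Lambda^n[n]$ denotes the poset whose objects are strictly increasing chains $A_0\subsetneq\dots\subsetneq A_m$ ($m\ge0$) of non-empty subsets of $[n]=\{0,\dots,n\}$ with $A_m\ne[n]$ and $A_m\ne\{0,\dots,n-1\}$, ordered by $B_\bullet\le A_\bullet$ iff each $B_j$ occurs among the $A_i$. $\pi$ sends $A_\bullet$ to $\min A_0$; for $S\subseteq[n]$, $\pi^{-1}(S)$ is the full subposet of chains with $\min A_0\in S$. For a full subposet $\mathcal{C}$, $V_+\mathcal{C}$ is the full subposet of all $d$ such that $c\le d$ for some $c\in\mathcal{C}$. *)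

theory Defs
  imports "HOL-Analysis.Analysis"
begin

text \<open>Weak contractibility: nonempty, and every continuous map from every
  k-sphere is (freely) homotopic to a constant map, i.e. all homotopy groups vanish.\<close>
definition weakly_contractible_space :: "'a topology \<Rightarrow> bool" where
  "weakly_contractible_space X \<longleftrightarrow> topspace X \<noteq> {} \<and>
     (\<forall>k f. continuous_map (nsphere k) X f \<longrightarrow>
        (\<exists>a. homotopic_with (\<lambda>_. True) (nsphere k) X f (\<lambda>_. a)))"

text \<open>Geometric realization of the nerve of a poset (P, le): the order complex,
  realized as finitely supported barycentric-coordinate functions whose support is a
  chain in P, with the subspace topology of the product topology (for finite P this is
  the standard geometric realization).\<close>
definition nerve_realization :: "'a set \<Rightarrow> ('a \<Rightarrow> 'a \<Rightarrow> bool) \<Rightarrow> ('a \<Rightarrow> real) topology" where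
  "nerve_realization P le = subtopology (powertop_real UNIV)
     {f. (\<forall>x. 0 \<le> f x) \<and> (\<forall>x. x \<notin> P \<longrightarrow> f x = 0) \<and> finite {x. f x \<noteq> 0}
         \<and> sum f {x. f x \<noteq> 0} = 1
         \<and> (\<forall>x y. f x \<noteq> 0 \<longrightarrow> f y \<noteq> 0 \<longrightarrow> le x y \<or> le y x)}"

text \<open>Objects of cSd^2 Lambda^n[n]: a strict chain A_0 < ... < A_m is represented by
  the (nonempty, totally ordered by inclusion) set {A_0,...,A_m} of nonempty subsets of
  [n] = {0..n}; the top element A_m is the union, which must differ from [n] and from
  {0,...,n-1}.  The order B <= A (each B_j occurs among the A_i) is inclusion of sets.\<close>
definition csd2_obj :: "nat \<Rightarrow> nat set set \<Rightarrow> bool" where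
  "csd2_obj n C \<longleftrightarrow> C \<noteq> {} \<and> finite C \<and>
     (\<forall>A\<in>C. A \<noteq> {} \<and> A \<subseteq> {0..n}) \<and>
     (\<forall>A\<in>C. \<forall>B\<in>C. A \<subseteq> B \<or> B \<subseteq> A) \<and>
     \<Union>C \<noteq> {0..n} \<and> \<Union>C \<noteq> {0..<n}"

definition csd2 :: "nat \<Rightarrow> nat set set set" where
  "csd2 n = {C. csd2_obj n C}"

text \<open>pi sends the chain to min A_0, where A_0 (the smallest set) is the intersection.\<close>
definition pi_map :: "nat set set \<Rightarrow> nat" where
  "pi_map C = Min (\<Inter>C)"

definition pi_inv :: "nat \<Rightarrow> nat set \<Rightarrow> nat set set set" where
  "pi_inv n S = {C \<in> csd2 n. pi_map C \<in> S}"

definition V_plus :: "nat \<Rightarrow> nat set set set \<Rightarrow> nat set set set" where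
  "V_plus n \<C> = {D \<in> csd2 n. \<exists>C\<in>\<C>. C \<subseteq> D}"

end

theory Submission
  imports Defs
begin

text \<open>The poset consists of the chains of faces of the horn whose bottom face lies in
  \<open>{n-1, n}\<close> and which contain a vertex \<open>\<le> n-2\<close>. By Quillen's homotopy property,
  comparable order-preserving self-maps of a finite poset induce homotopic maps of its
  realization, so it suffices to join the identity to a constant map by a zigzag of comparable
  maps, each applied facewise to chains. First \<open>n\<close> is adjoined to the faces of size \<open>\<ge> j\<close>,
  for \<open>j\<close> decreasing from \<open>n+2\<close> to \<open>0\<close>; then \<open>n-1\<close> is removed from the faces of size
  \<open>\<le> j\<close>, for \<open>j\<close> increasing up to \<open>n+1\<close>. Consecutive maps are comparable through the
  union of the two image chains. At the end every face lies between \<open>{n}\<close> and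
  \<open>[n] - {n-1}\<close>, so the image of every chain is comparable, again through the union,
  with the constant chain \<open>{{n}, [n] - {n-1}}\<close>.\<close>

definition nerve_points :: "'a set \<Rightarrow> ('a \<Rightarrow> 'a \<Rightarrow> bool) \<Rightarrow> ('a \<Rightarrow> real) set" where
  "nerve_points P le = {f. (\<forall>x. 0 \<le> f x) \<and> (\<forall>x. x \<notin> P \<longrightarrow> f x = 0) \<and> finite {x. f x \<noteq> 0}
     \<and> sum f {x. f x \<noteq> 0} = 1 \<and> (\<forall>x y. f x \<noteq> 0 \<longrightarrow> f y \<noteq> 0 \<longrightarrow> le x y \<or> le y x)}"

lemma nerve_realization_eq:
  "nerve_realization P le = subtopology (powertop_real UNIV) (nerve_points P le)"
  by (simp add: nerve_realization_def nerve_points_def)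

lemma topspace_nerve_realization: "topspace (nerve_realization P le) = nerve_points P le"
  by (simp add: nerve_realization_def nerve_points_def)

lemma nerve_pointsI:
  assumes "finite P" "\<And>x. 0 \<le> f x" "\<And>x. x \<notin> P \<Longrightarrow> f x = 0" "sum f P = 1"
    "\<And>x y. f x \<noteq> 0 \<Longrightarrow> f y \<noteq> 0 \<Longrightarrow> le x y \<or> le y x"
  shows "f \<in> nerve_points P le"
proof -
  have supp: "{x. f x \<noteq> 0} \<subseteq> P"
    using assms(3) by auto
  then have "sum f {x. f x \<noteq> 0} = sum f P"
    by (intro sum.mono_neutral_left) (use assms in auto)
  with assms supp show ?thesis
    by (auto simp: nerve_points_def intro: finite_subset)
qed

lemma nerve_points_sum:
  assumes "finite P" "f \<in> nerve_points P le"
  shows "sum f P = 1"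
proof -
  have "{x. f x \<noteq> 0} \<subseteq> P"
    using assms by (auto simp: nerve_points_def)
  then have "sum f {x. f x \<noteq> 0} = sum f P"
    by (intro sum.mono_neutral_left) (use assms in auto)
  with assms show ?thesis
    by (simp add: nerve_points_def)
qed

lemma vertex_in_nerve_points:
  fixes c :: "'a::order"
  assumes "c \<in> P"
  shows "(\<lambda>x. if x = c then 1 else 0) \<in> nerve_points P (\<le>)"
proof -
  have "{x. (if x = c then 1 else 0 :: real) \<noteq> 0} = {c}"
    by auto
  then show ?thesis
    using assms by (simp add: nerve_points_def)
qed

lemma continuous_map_nerve_coordinate:
  "continuous_map (nerve_realization P le) euclideanreal (\<lambda>f. f x)"
  unfolding nerve_realization_eq
  by (intro continuous_map_from_subtopology continuous_map_product_projection) auto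

definition nerve_map :: "'a set \<Rightarrow> ('a \<Rightarrow> 'b) \<Rightarrow> ('a \<Rightarrow> real) \<Rightarrow> 'b \<Rightarrow> real" where
  "nerve_map P r f = (\<lambda>y. \<Sum>x\<in>{x\<in>P. r x = y}. f x)"

lemma nerve_map_cong: "(\<And>x. x \<in> P \<Longrightarrow> r x = s x) \<Longrightarrow> nerve_map P r = nerve_map P s"
  unfolding nerve_map_def by (intro ext sum.cong) auto

lemma nerve_map_cong_weights: "(\<And>x. x \<in> P \<Longrightarrow> f x = g x) \<Longrightarrow> nerve_map P r f = nerve_map P r g"
  unfolding nerve_map_def by (intro ext sum.cong) auto

lemma nerve_map_nonzero:
  assumes "nerve_map P r f y \<noteq> 0"
  obtains x where "x \<in> P" "r x = y" "f x \<noteq> 0"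
proof -
  from assms obtain x where "x \<in> {x\<in>P. r x = y}" "f x \<noteq> 0"
    unfolding nerve_map_def by (rule sum.not_neutral_contains_not_neutral)
  then show thesis
    using that by blast
qed

lemma sum_nerve_map:
  assumes "finite P" "finite Q" "r ` P \<subseteq> Q"
  shows "sum (nerve_map P r f) Q = sum f P"
  unfolding nerve_map_def using assms by (rule sum.group)

lemma nerve_map_id:
  assumes "f \<in> nerve_points P le"
  shows "nerve_map P id f = f"
proof
  fix y
  show "nerve_map P id f y = f y"
  proof (cases "y \<in> P")
    case True
    then have "{x\<in>P. id x = y} = {y}"
      by auto
    then show ?thesis
      by (simp add: nerve_map_def)
  next
    case False
    then show ?thesis
      using assms by (simp add: nerve_map_def nerve_points_def)
  qed
qed

lemma nerve_map_const:
  assumes "finite P" "f \<in> nerve_points P le"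
  shows "nerve_map P (\<lambda>_. c) f = (\<lambda>y. if y = c then 1 else 0)"
proof
  fix y
  show "nerve_map P (\<lambda>_. c) f y = (if y = c then 1 else 0)"
    using nerve_points_sum[OF assms] by (cases "y = c") (simp_all add: nerve_map_def)
qed

definition mass_above :: "'a::order set \<Rightarrow> ('a \<Rightarrow> real) \<Rightarrow> 'a \<Rightarrow> real" where
  "mass_above P f x = (\<Sum>z\<in>{z\<in>P. x < z}. f z)"

text \<open>The homotopy from \<open>nerve_map P r\<close> to \<open>nerve_map P s\<close> stacks the weights of a chain
  from its top element downwards and, at time \<open>t\<close>, moves the top \<open>t\<close> units of weight from
  \<open>r\<close> to \<open>s\<close>. Moved weight then sits above unmoved weight, which together with \<open>r \<le> s\<close>
  keeps the support a chain.\<close>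
definition moved_mass :: "'a::order set \<Rightarrow> real \<Rightarrow> ('a \<Rightarrow> real) \<Rightarrow> 'a \<Rightarrow> real" where
  "moved_mass P t f x = max 0 (min (f x) (t - mass_above P f x))"

definition prism_homotopy ::
    "'a::order set \<Rightarrow> ('a \<Rightarrow> 'a) \<Rightarrow> ('a \<Rightarrow> 'a) \<Rightarrow> real \<Rightarrow> ('a \<Rightarrow> real) \<Rightarrow> 'a \<Rightarrow> real" where
  "prism_homotopy P r s t f =
     (\<lambda>y. nerve_map P r (\<lambda>x. f x - moved_mass P t f x) y + nerve_map P s (moved_mass P t f) y)"

lemma moved_mass_bounds: "0 \<le> f x \<Longrightarrow> 0 \<le> moved_mass P t f x \<and> moved_mass P t f x \<le> f x"
  by (simp add: moved_mass_def)

lemma mass_above_nonneg: "f \<in> nerve_points P le \<Longrightarrow> 0 \<le> mass_above P f x"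
  unfolding mass_above_def nerve_points_def by (auto intro: sum_nonneg)

lemma mass_above_add_le:
  assumes "finite P" "f \<in> nerve_points P le" "x \<in> P" "y < x"
  shows "mass_above P f x + f x \<le> mass_above P f y"
proof -
  have "mass_above P f x + f x = sum f (insert x {z\<in>P. x < z})"
    unfolding mass_above_def using assms by (subst sum.insert) auto
  also have "\<dots> \<le> sum f {z\<in>P. y < z}"
    by (rule sum_mono2) (use assms in \<open>auto simp: nerve_points_def\<close>)
  finally show ?thesis
    unfolding mass_above_def .
qed

lemma mass_above_add_le_1:
  assumes "finite P" "f \<in> nerve_points P le" "x \<in> P"
  shows "mass_above P f x + f x \<le> 1"
proof -
  have "mass_above P f x + f x = sum f (insert x {z\<in>P. x < z})"
    unfolding mass_above_def using assms by (subst sum.insert) auto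
  also have "\<dots> \<le> sum f P"
    by (rule sum_mono2) (use assms in \<open>auto simp: nerve_points_def\<close>)
  finally show ?thesis
    using nerve_points_sum[OF assms(1,2)] by simp
qed

lemma moved_mass_0: "f \<in> nerve_points P le \<Longrightarrow> moved_mass P 0 f x = 0"
  using mass_above_nonneg[of f P le x] by (simp add: moved_mass_def nerve_points_def)

lemma moved_mass_1:
  "finite P \<Longrightarrow> f \<in> nerve_points P le \<Longrightarrow> x \<in> P \<Longrightarrow> moved_mass P 1 f x = f x"
  using mass_above_add_le_1[of P f le x] by (simp add: moved_mass_def nerve_points_def)

lemma unmoved_le_moved:
  fixes P :: "'a::order set"
  assumes "finite P" "f \<in> nerve_points P (\<le>)" "u \<in> P"
    and "moved_mass P t f u < f u" "0 < moved_mass P t f v"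
  shows "u \<le> v"
proof (rule ccontr)
  assume "\<not> u \<le> v"
  have "0 \<le> f x" for x
    using assms(2) by (simp add: nerve_points_def)
  then have "f u \<noteq> 0" "f v \<noteq> 0"
    using moved_mass_bounds[of f u P t] moved_mass_bounds[of f v P t] assms(4,5) by fastforce+
  then have "u \<le> v \<or> v \<le> u"
    using assms(2) by (simp add: nerve_points_def)
  with \<open>\<not> u \<le> v\<close> have "v < u"
    by (simp add: less_le_not_le)
  then have "mass_above P f u + f u \<le> mass_above P f v"
    by (rule mass_above_add_le[OF assms(1-3)])
  then show False
    using assms(4,5) mass_above_nonneg[OF assms(2), of u] by (auto simp: moved_mass_def)
qed

lemma prism_homotopy_nonzero:
  assumes "f \<in> nerve_points P le" "prism_homotopy P r s t f y \<noteq> 0"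
  shows "(\<exists>x\<in>P. y = r x \<and> moved_mass P t f x < f x) \<or> (\<exists>x\<in>P. y = s x \<and> 0 < moved_mass P t f x)"
proof -
  have f0: "0 \<le> f x" for x
    using assms(1) by (simp add: nerve_points_def)
  have m: "0 \<le> moved_mass P t f x \<and> moved_mass P t f x \<le> f x" for x
    using moved_mass_bounds f0 by blast
  show ?thesis
  proof (cases "nerve_map P r (\<lambda>x. f x - moved_mass P t f x) y = 0")
    case True
    with assms(2) obtain x where "x \<in> P" "s x = y" "moved_mass P t f x \<noteq> 0"
      unfolding prism_homotopy_def by (auto elim: nerve_map_nonzero)
    then show ?thesis
      using m[of x] by force
  next
    case False
    then obtain x where "x \<in> P" "r x = y" "f x - moved_mass P t f x \<noteq> 0"
      by (rule nerve_map_nonzero)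
    then show ?thesis
      using m[of x] by force
  qed
qed

lemma prism_homotopy_in_nerve_points:
  fixes P :: "'a::order set"
  assumes fin: "finite P" and f: "f \<in> nerve_points P (\<le>)"
    and rP: "r ` P \<subseteq> P" and sP: "s ` P \<subseteq> P"
    and r: "mono_on P r" and s: "mono_on P s" and rs: "\<And>x. x \<in> P \<Longrightarrow> r x \<le> s x"
  shows "prism_homotopy P r s t f \<in> nerve_points P (\<le>)"
proof (rule nerve_pointsI[OF fin])
  let ?m = "moved_mass P t f"
  have f0: "0 \<le> f x" for x
    using f by (simp add: nerve_points_def)
  have m: "0 \<le> ?m x \<and> ?m x \<le> f x" for x
    using moved_mass_bounds f0 by blast
  show "0 \<le> prism_homotopy P r s t f y" for y
    using m unfolding prism_homotopy_def nerve_map_def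
    by (intro add_nonneg_nonneg sum_nonneg) auto
  show "prism_homotopy P r s t f y = 0" if "y \<notin> P" for y
  proof -
    have none: "{x\<in>P. r x = y} = {}" "{x\<in>P. s x = y} = {}"
      using that rP sP by auto
    show ?thesis
      by (simp only: prism_homotopy_def nerve_map_def none sum.empty add_0)
  qed
  show "sum (prism_homotopy P r s t f) P = 1"
    using nerve_points_sum[OF fin f]
    by (simp add: prism_homotopy_def sum.distrib sum_nerve_map[OF fin fin rP]
        sum_nerve_map[OF fin fin sP] sum_subtractf)
  have comparable: "x \<le> x' \<or> x' \<le> x" if "f x \<noteq> 0" "f x' \<noteq> 0" for x x'
    using f that by (auto simp: nerve_points_def)
  have image_comparable: "g u \<le> g v \<or> g v \<le> g u"
    if "mono_on P g" "u \<in> P" "v \<in> P" "f u \<noteq> 0" "f v \<noteq> 0" for g u v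
    using comparable[OF that(4,5)] mono_onD[OF that(1)] that(2,3) by blast
  have unmoved_below_moved: "r u \<le> s v"
    if "u \<in> P" "v \<in> P" "?m u < f u" "0 < ?m v" for u v
    using unmoved_le_moved[OF fin f that(1,3,4)] mono_onD[OF r] that(1,2) rs[OF that(2)]
    by (blast intro: order_trans)
  show "y \<le> y' \<or> y' \<le> y"
    if "prism_homotopy P r s t f y \<noteq> 0" "prism_homotopy P r s t f y' \<noteq> 0" for y y'
    using prism_homotopy_nonzero[OF f that(1)] prism_homotopy_nonzero[OF f that(2)] m
    by (smt (verit) image_comparable r s unmoved_below_moved)
qed

lemma continuous_map_prism_homotopy:
  fixes P :: "'a::order set"
  assumes "finite P" "\<And>t f. f \<in> nerve_points P (\<le>) \<Longrightarrow> prism_homotopy P r s t f \<in> nerve_points P (\<le>)"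
  shows "continuous_map (prod_topology (top_of_set {0..1}) (nerve_realization P (\<le>)))
           (nerve_realization P (\<le>)) (\<lambda>p. prism_homotopy P r s (fst p) (snd p))"
proof -
  let ?Z = "prod_topology (top_of_set {0..1}) (nerve_realization P (\<le>))"
  have coordinate: "continuous_map ?Z euclideanreal (\<lambda>p. snd p x)" for x
    using continuous_map_compose[OF continuous_map_snd continuous_map_nerve_coordinate]
    by (simp add: o_def)
  have time: "continuous_map ?Z euclideanreal fst"
    by (rule continuous_map_into_fulltopology[OF continuous_map_fst])
  have "continuous_map ?Z euclideanreal (\<lambda>p. mass_above P (snd p) x)" for x
    unfolding mass_above_def by (intro continuous_map_sum coordinate) (use assms in auto)
  then have moved: "continuous_map ?Z euclideanreal (\<lambda>p. moved_mass P (fst p) (snd p) x)" for x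
    unfolding moved_mass_def
    by (intro continuous_map_real_max continuous_map_real_min continuous_map_diff coordinate time)
      auto
  have "continuous_map ?Z euclideanreal (\<lambda>p. prism_homotopy P r s (fst p) (snd p) y)" for y
    unfolding prism_homotopy_def nerve_map_def
    by (intro continuous_map_add continuous_map_sum continuous_map_diff coordinate moved)
      (use assms in auto)
  then have "continuous_map ?Z (powertop_real UNIV) (\<lambda>p. prism_homotopy P r s (fst p) (snd p))"
    by (simp add: continuous_map_componentwise_UNIV)
  then show ?thesis
    unfolding nerve_realization_eq
    by (rule continuous_map_into_subtopology) (use assms(2) in \<open>auto simp: topspace_nerve_realization\<close>)
qed

abbreviation nerve_homotopic :: "'a::order set \<Rightarrow> ('a \<Rightarrow> 'a) \<Rightarrow> ('a \<Rightarrow> 'a) \<Rightarrow> bool" where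
  "nerve_homotopic P r s \<equiv>
     homotopic_with (\<lambda>_. True) (nerve_realization P (\<le>)) (nerve_realization P (\<le>))
       (nerve_map P r) (nerve_map P s)"

theorem nerve_homotopic_le:
  fixes P :: "'a::order set"
  assumes fin: "finite P" and maps: "r ` P \<subseteq> P" "s ` P \<subseteq> P"
    and mono: "mono_on P r" "mono_on P s" and le: "\<And>x. x \<in> P \<Longrightarrow> r x \<le> s x"
  shows "nerve_homotopic P r s"
proof -
  have points: "prism_homotopy P r s t f \<in> nerve_points P (\<le>)"
    if "f \<in> nerve_points P (\<le>)" for t f
    by (rule prism_homotopy_in_nerve_points[OF fin that maps mono le])
  have start: "prism_homotopy P r s 0 f = nerve_map P r f" if "f \<in> nerve_points P (\<le>)" for f
    using moved_mass_0[OF that] by (simp add: prism_homotopy_def nerve_map_def)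
  have finish: "prism_homotopy P r s 1 f = nerve_map P s f" if "f \<in> nerve_points P (\<le>)" for f
  proof -
    have "nerve_map P r (\<lambda>x. f x - moved_mass P 1 f x) = nerve_map P r (\<lambda>_. 0)"
      "nerve_map P s (moved_mass P 1 f) = nerve_map P s f"
      using moved_mass_1[OF fin that] by (auto intro: nerve_map_cong_weights)
    then show ?thesis
      by (simp add: prism_homotopy_def nerve_map_def)
  qed
  show ?thesis
    using continuous_map_prism_homotopy[OF fin points] start finish
    by (subst homotopic_with)
      (auto simp: topspace_nerve_realization
        intro!: exI[of _ "\<lambda>p. prism_homotopy P r s (fst p) (snd p)"])
qed

corollary nerve_homotopic_common_upper_bound:
  fixes P :: "'a::order set"
  assumes "finite P" "r ` P \<subseteq> P" "s ` P \<subseteq> P" "u ` P \<subseteq> P"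
    and "mono_on P r" "mono_on P s" "mono_on P u"
    and "\<And>x. x \<in> P \<Longrightarrow> r x \<le> u x" "\<And>x. x \<in> P \<Longrightarrow> s x \<le> u x"
  shows "nerve_homotopic P r s"
  using homotopic_with_trans[OF nerve_homotopic_le[of P r u]
      homotopic_with_symD[OF nerve_homotopic_le[of P s u]]] assms
  by blast

lemma homotopic_with_ladder:
  assumes "\<And>j. homotopic_with Q X Y (f j) (f (Suc j))"
  shows "homotopic_with Q X Y (f 0) (f (Suc k))"
proof (induction k)
  case (Suc k)
  then show ?case
    using homotopic_with_trans assms by blast
qed (rule assms)

lemma contractible_nerve_realization:
  fixes P :: "'a::order set"
  assumes "finite P" "nerve_homotopic P id (\<lambda>_. c)"
  shows "contractible_space (nerve_realization P (\<le>))"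
  unfolding contractible_space_def
proof
  show "homotopic_with (\<lambda>_. True) (nerve_realization P (\<le>)) (nerve_realization P (\<le>)) id
      (\<lambda>_. (\<lambda>x. if x = c then 1 else 0))"
    by (rule homotopic_with_eq[OF assms(2)])
      (simp_all add: topspace_nerve_realization nerve_map_id nerve_map_const[OF assms(1)])
qed

lemma weakly_contractible_if_contractible:
  assumes "contractible_space X" "topspace X \<noteq> {}"
  shows "weakly_contractible_space X"
  unfolding weakly_contractible_space_def
  using assms nullhomotopic_into_contractible_space by metis

definition horn_face :: "nat \<Rightarrow> nat set \<Rightarrow> bool" where
  "horn_face n A \<longleftrightarrow> A \<noteq> {} \<and> A \<subseteq> {0..n} \<and> A \<noteq> {0..n} \<and> A \<noteq> {0..<n}"

definition horn_chain :: "nat \<Rightarrow> nat set set \<Rightarrow> bool" where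
  "horn_chain n C \<longleftrightarrow> C \<noteq> {} \<and> finite C \<and> (\<forall>A\<in>C. horn_face n A) \<and> (\<forall>A\<in>C. \<forall>B\<in>C. A \<subseteq> B \<or> B \<subseteq> A)"

definition straddling_chain :: "nat \<Rightarrow> nat set set \<Rightarrow> bool" where
  "straddling_chain n C \<longleftrightarrow> horn_chain n C \<and> (\<exists>A\<in>C. A \<subseteq> {n - 1, n}) \<and> (\<exists>A\<in>C. \<exists>x\<in>A. x \<le> n - 2)"

lemma subset_atMost_cases:
  fixes U :: "nat set"
  assumes "{0..<n} \<subseteq> U" "U \<subseteq> {0..n}"
  shows "U = {0..<n} \<or> U = {0..n}"
  using assms by (cases "n \<in> U") (auto simp: subset_iff le_less)

lemma horn_face_finite: "horn_face n A \<Longrightarrow> finite A"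
  unfolding horn_face_def using finite_subset by blast

lemma horn_face_card_insert: "horn_face n A \<Longrightarrow> card (insert n A) \<le> Suc n"
  unfolding horn_face_def using card_mono[of "{0..n}" "insert n A"] by auto

lemma horn_face_insert_top:
  assumes "horn_face n A"
  shows "horn_face n (insert n A)"
proof -
  have "insert n A \<noteq> {0..n}"
  proof
    assume "insert n A = {0..n}"
    then have "{0..<n} \<subseteq> A"
      by auto
    then show False
      using subset_atMost_cases assms by (auto simp: horn_face_def)
  qed
  then show ?thesis
    using assms by (auto simp: horn_face_def)
qed

lemma horn_faceI_top:
  assumes "1 \<le> n" "A \<subseteq> {0..n}" "n \<in> A" "n - 1 \<notin> A"
  shows "horn_face n A"
  using assms unfolding horn_face_def
  by (metis atLeastAtMost_iff atLeastLessThan_iff diff_le_self empty_iff less_irrefl zero_le)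

lemma horn_chain_subset_chain: "horn_chain n C \<Longrightarrow> subset.chain UNIV C"
  by (simp add: horn_chain_def subset_chain_def)

lemma csd2_obj_iff_horn_chain: "csd2_obj n C \<longleftrightarrow> horn_chain n C"
proof
  assume C: "csd2_obj n C"
  have "horn_face n A" if "A \<in> C" for A
  proof -
    have "A \<subseteq> \<Union>C" "\<Union>C \<subseteq> {0..n}"
      using C that by (auto simp: csd2_obj_def)
    then have "A \<noteq> {0..n}" "A \<noteq> {0..<n}"
      using C subset_atMost_cases[of n "\<Union>C"] by (auto simp: csd2_obj_def)
    then show ?thesis
      using C that by (simp add: csd2_obj_def horn_face_def)
  qed
  then show "horn_chain n C"
    using C by (simp add: csd2_obj_def horn_chain_def)
next
  assume C: "horn_chain n C"
  then have "\<Union>C \<in> C"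
    using Union_in_chain[OF _ _ horn_chain_subset_chain[OF C]] by (simp add: horn_chain_def)
  then show "csd2_obj n C"
    using C by (simp add: csd2_obj_def horn_chain_def horn_face_def)
qed

lemma pi_map_in_Inter:
  assumes "horn_chain n C"
  shows "pi_map C \<in> \<Inter>C" "\<Inter>C \<in> C"
proof -
  show bottom: "\<Inter>C \<in> C"
    using assms Inter_in_chain[OF _ _ horn_chain_subset_chain[OF assms]]
    by (simp add: horn_chain_def)
  then have "horn_face n (\<Inter>C)"
    using assms by (simp add: horn_chain_def)
  then show "pi_map C \<in> \<Inter>C"
    unfolding pi_map_def using horn_face_finite by (intro Min_in) (auto simp: horn_face_def)
qed

lemma pi_map_top_pair_iff:
  assumes "horn_chain n C"
  shows "pi_map C \<in> {n - 1, n} \<longleftrightarrow> (\<exists>A\<in>C. A \<subseteq> {n - 1, n})"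
proof
  have face: "horn_face n (\<Inter>C)"
    using pi_map_in_Inter(2)[OF assms] assms by (simp add: horn_chain_def)
  assume "pi_map C \<in> {n - 1, n}"
  moreover have "pi_map C \<le> x" "x \<le> n" if "x \<in> \<Inter>C" for x
    using that face horn_face_finite[OF face] unfolding pi_map_def horn_face_def
    by auto
  ultimately have "\<Inter>C \<subseteq> {n - 1, n}"
    by force
  then show "\<exists>A\<in>C. A \<subseteq> {n - 1, n}"
    using pi_map_in_Inter(2)[OF assms] by blast
qed (use pi_map_in_Inter(1)[OF assms] in blast)

lemma pi_inv_Int_V_plus_eq:
  "pi_inv n {n - 1, n} \<inter> V_plus n (pi_inv n {0..n - 2}) = {C. straddling_chain n C}"
proof (intro set_eqI iffI)
  fix C
  assume "C \<in> pi_inv n {n - 1, n} \<inter> V_plus n (pi_inv n {0..n - 2})"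
  then obtain B where C: "horn_chain n C" "pi_map C \<in> {n - 1, n}"
    and B: "horn_chain n B" "pi_map B \<le> n - 2" "B \<subseteq> C"
    by (auto simp: pi_inv_def V_plus_def csd2_def csd2_obj_iff_horn_chain)
  have "\<exists>A\<in>C. \<exists>x\<in>A. x \<le> n - 2"
    using pi_map_in_Inter[OF B(1)] B(2,3) by blast
  then show "C \<in> {C. straddling_chain n C}"
    using C pi_map_top_pair_iff by (simp add: straddling_chain_def)
next
  fix C
  assume "C \<in> {C. straddling_chain n C}"
  then obtain A x where C: "horn_chain n C" "\<exists>A\<in>C. A \<subseteq> {n - 1, n}"
    and A: "A \<in> C" "x \<in> A" "x \<le> n - 2"
    by (auto simp: straddling_chain_def)
  have "horn_face n A"
    using C A by (simp add: horn_chain_def)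
  then have "horn_chain n {A}" "pi_map {A} \<le> n - 2"
    using A horn_face_finite[of n A] by (auto simp: horn_chain_def pi_map_def intro: Min_le order_trans)
  then have "C \<in> V_plus n (pi_inv n {0..n - 2})"
    using C A by (auto simp: V_plus_def pi_inv_def csd2_def csd2_obj_iff_horn_chain)
  then show "C \<in> pi_inv n {n - 1, n} \<inter> V_plus n (pi_inv n {0..n - 2})"
    using C pi_map_top_pair_iff by (simp add: pi_inv_def csd2_def csd2_obj_iff_horn_chain)
qed

lemma finite_straddling_chains: "finite {C. straddling_chain n C}"
proof (rule finite_subset)
  show "{C. straddling_chain n C} \<subseteq> Pow (Pow {0..n})"
    by (auto simp: straddling_chain_def horn_chain_def horn_face_def)
qed simp

definition admissible_map :: "nat \<Rightarrow> (nat set \<Rightarrow> nat set) \<Rightarrow> bool" where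
  "admissible_map n f \<longleftrightarrow>
     (\<forall>A. horn_face n A \<longrightarrow> horn_face n (f A)) \<and>
     (\<forall>A B. horn_face n A \<longrightarrow> horn_face n B \<longrightarrow> A \<subseteq> B \<longrightarrow> f A \<subseteq> f B) \<and>
     (\<forall>A. A \<subseteq> {n - 1, n} \<longrightarrow> f A \<subseteq> {n - 1, n}) \<and>
     (\<forall>A. \<forall>x\<in>A. x \<le> n - 2 \<longrightarrow> x \<in> f A)"

lemma admissible_mapD:
  assumes "admissible_map n f"
  shows "horn_face n A \<Longrightarrow> horn_face n (f A)"
    and "horn_face n A \<Longrightarrow> horn_face n B \<Longrightarrow> A \<subseteq> B \<Longrightarrow> f A \<subseteq> f B"
    and "A \<subseteq> {n - 1, n} \<Longrightarrow> f A \<subseteq> {n - 1, n}"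
    and "x \<in> A \<Longrightarrow> x \<le> n - 2 \<Longrightarrow> x \<in> f A"
  using assms by (simp_all add: admissible_map_def)

lemma straddling_chain_image:
  assumes f: "admissible_map n f" and C: "straddling_chain n C"
  shows "straddling_chain n (f ` C)"
proof -
  have faces: "horn_face n A" if "A \<in> C" for A
    using C that by (simp add: straddling_chain_def horn_chain_def)
  have chain: "f A \<subseteq> f B \<or> f B \<subseteq> f A" if "A \<in> C" "B \<in> C" for A B
  proof -
    have "A \<subseteq> B \<or> B \<subseteq> A"
      using C that by (simp add: straddling_chain_def horn_chain_def)
    then show ?thesis
      using admissible_mapD(2)[OF f] faces that by blast
  qed
  obtain A where "A \<in> C" "A \<subseteq> {n - 1, n}"
    using C by (auto simp: straddling_chain_def)
  then have bottom: "\<exists>A\<in>f ` C. A \<subseteq> {n - 1, n}"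
    using admissible_mapD(3)[OF f] by blast
  obtain A' x where "A' \<in> C" "x \<in> A'" "x \<le> n - 2"
    using C by (auto simp: straddling_chain_def)
  then have low: "\<exists>A\<in>f ` C. \<exists>x\<in>A. x \<le> n - 2"
    using admissible_mapD(4)[OF f] by blast
  have "horn_chain n (f ` C)"
    unfolding horn_chain_def
  proof (intro conjI ballI)
    show "f ` C \<noteq> {}" "finite (f ` C)"
      using C by (simp_all add: straddling_chain_def horn_chain_def)
  qed (use chain faces admissible_mapD(1)[OF f] in auto)
  with bottom low show ?thesis
    unfolding straddling_chain_def by blast
qed

lemma straddling_chain_Un:
  assumes "straddling_chain n C" "horn_chain n D" "\<forall>A\<in>C. \<forall>B\<in>D. A \<subseteq> B \<or> B \<subseteq> A"
  shows "straddling_chain n (C \<union> D)"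
proof -
  have "\<forall>A\<in>C \<union> D. \<forall>B\<in>C \<union> D. A \<subseteq> B \<or> B \<subseteq> A"
    using assms unfolding straddling_chain_def horn_chain_def by (metis Un_iff)
  with assms show ?thesis
    unfolding straddling_chain_def horn_chain_def by (simp add: bex_Un ball_Un)
qed

lemma nerve_homotopic_images:
  assumes f: "admissible_map n f" and g: "admissible_map n g"
    and cross: "\<And>A B. horn_face n A \<Longrightarrow> horn_face n B \<Longrightarrow> A \<subseteq> B \<or> B \<subseteq> A \<Longrightarrow> f A \<subseteq> g B \<or> g B \<subseteq> f A"
  shows "nerve_homotopic {C. straddling_chain n C} ((`) f) ((`) g)"
proof (rule nerve_homotopic_common_upper_bound[where u = "\<lambda>C. f ` C \<union> g ` C"])
  let ?P = "{C. straddling_chain n C}"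
  have image: "straddling_chain n (h ` C)" if "admissible_map n h" "C \<in> ?P" for h C
    using straddling_chain_image that by blast
  have "straddling_chain n (f ` C \<union> g ` C)" if "C \<in> ?P" for C
  proof (rule straddling_chain_Un)
    show "straddling_chain n (f ` C)" "horn_chain n (g ` C)"
      using image[OF f that] image[OF g that] by (simp_all add: straddling_chain_def)
    show "\<forall>A\<in>f ` C. \<forall>B\<in>g ` C. A \<subseteq> B \<or> B \<subseteq> A"
      using that cross by (auto simp: straddling_chain_def horn_chain_def)
  qed
  then show "(`) f ` ?P \<subseteq> ?P" "(`) g ` ?P \<subseteq> ?P" "(\<lambda>C. f ` C \<union> g ` C) ` ?P \<subseteq> ?P"
    using image f g by auto
  show "mono_on ?P ((`) f)" "mono_on ?P ((`) g)" "mono_on ?P (\<lambda>C. f ` C \<union> g ` C)"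
    by (auto intro!: mono_onI)
qed (use finite_straddling_chains in auto)

definition adjoin_top :: "nat \<Rightarrow> nat \<Rightarrow> nat set \<Rightarrow> nat set" where
  "adjoin_top n j A = (if j \<le> card A then insert n A else A)"

definition remove_penultimate :: "nat \<Rightarrow> nat \<Rightarrow> nat set \<Rightarrow> nat set" where
  "remove_penultimate n j A = (if card (insert n A) \<le> j then insert n A - {n - 1} else insert n A)"

definition cap_chain :: "nat \<Rightarrow> nat set set" where
  "cap_chain n = {{n}, {0..n} - {n - 1}}"

lemma admissible_adjoin_top: "admissible_map n (adjoin_top n j)"
proof -
  have "adjoin_top n j A \<subseteq> adjoin_top n j B" if "horn_face n B" "A \<subseteq> B" for A B
  proof -
    have "card A \<le> card B"
      using that horn_face_finite card_mono by blast
    then show ?thesis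
      using that by (auto simp: adjoin_top_def)
  qed
  then show ?thesis
    unfolding admissible_map_def by (auto simp: adjoin_top_def intro: horn_face_insert_top)
qed

lemma adjoin_top_comparable:
  assumes "horn_face n A" "horn_face n B" "A \<subseteq> B \<or> B \<subseteq> A"
  shows "adjoin_top n j A \<subseteq> adjoin_top n (Suc j) B \<or> adjoin_top n (Suc j) B \<subseteq> adjoin_top n j A"
proof (cases "B \<subseteq> A")
  case True
  have "card B \<le> card A"
    using True assms(1) horn_face_finite card_mono by blast
  then show ?thesis
    using True by (auto simp: adjoin_top_def)
next
  case False
  then have "card A < card B"
    using assms(2,3) horn_face_finite psubset_card_mono by blast
  then show ?thesis
    using False assms(3) by (auto simp: adjoin_top_def)
qed

lemma admissible_remove_penultimate:
  assumes "2 \<le> n"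
  shows "admissible_map n (remove_penultimate n j)"
proof -
  have "remove_penultimate n j A \<subseteq> remove_penultimate n j B"
    if "horn_face n B" "A \<subseteq> B" for A B
  proof -
    have "card (insert n A) \<le> card (insert n B)"
      using that horn_face_finite by (intro card_mono) auto
    then show ?thesis
      using that by (auto simp: remove_penultimate_def)
  qed
  moreover have "horn_face n (insert n A - {n - 1})" if "horn_face n A" for A
    using assms that by (intro horn_faceI_top) (auto simp: horn_face_def)
  ultimately show ?thesis
    using assms unfolding admissible_map_def
    by (auto simp: remove_penultimate_def intro: horn_face_insert_top)
qed

lemma remove_penultimate_comparable:
  assumes "horn_face n A" "horn_face n B" "A \<subseteq> B \<or> B \<subseteq> A"
  shows "remove_penultimate n j A \<subseteq> remove_penultimate n (Suc j) B
    \<or> remove_penultimate n (Suc j) B \<subseteq> remove_penultimate n j A"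
proof (cases "B \<subseteq> A \<or> insert n A = insert n B")
  case True
  have "card (insert n B) \<le> card (insert n A)" if "B \<subseteq> A"
    using that assms(1) horn_face_finite by (intro card_mono) auto
  then have "remove_penultimate n j B \<subseteq> remove_penultimate n j A"
    using True by (auto simp: remove_penultimate_def)
  moreover have "remove_penultimate n (Suc j) B \<subseteq> remove_penultimate n j B"
    by (auto simp: remove_penultimate_def)
  ultimately show ?thesis
    by blast
next
  case False
  then have "insert n A \<subset> insert n B"
    using assms(3) by blast
  then have "card (insert n A) < card (insert n B)"
    using assms(2) horn_face_finite by (intro psubset_card_mono) auto
  then show ?thesis
    using \<open>insert n A \<subset> insert n B\<close> by (auto simp: remove_penultimate_def)
qed

lemma straddling_cap_chain:
  assumes "2 \<le> n"
  shows "straddling_chain n (cap_chain n)"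
proof -
  have "horn_face n {n}" "horn_face n ({0..n} - {n - 1})"
    using assms by (auto intro: horn_faceI_top)
  moreover have "0 \<in> {0..n} - {n - 1}" "{n} \<subseteq> {0..n} - {n - 1}"
    using assms by auto
  ultimately show ?thesis
    unfolding straddling_chain_def horn_chain_def cap_chain_def by auto
qed

lemma remove_penultimate_cap_comparable:
  assumes "1 \<le> n" "horn_face n A" "B \<in> cap_chain n"
  shows "remove_penultimate n (Suc n) A \<subseteq> B \<or> B \<subseteq> remove_penultimate n (Suc n) A"
proof -
  have "n \<in> remove_penultimate n (Suc n) A" "remove_penultimate n (Suc n) A \<subseteq> {0..n} - {n - 1}"
    using assms(1,2) horn_face_card_insert[OF assms(2)]
    by (auto simp: remove_penultimate_def horn_face_def)
  then show ?thesis
    using assms(3) by (auto simp: cap_chain_def)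
qed

lemma nerve_homotopic_id_remove_penultimate:
  "nerve_homotopic {C. straddling_chain n C} id ((`) (remove_penultimate n 0))"
proof -
  let ?P = "{C. straddling_chain n C}"
  let ?adjoin = "\<lambda>j. nerve_map ?P ((`) (adjoin_top n j))"
  have faces: "horn_face n A" if "C \<in> ?P" "A \<in> C" for C A
    using that by (simp add: straddling_chain_def horn_chain_def)
  have "adjoin_top n (Suc (Suc n)) A = A" if "horn_face n A" for A
    using horn_face_card_insert[OF that] card_insert_le[of A n]
    by (simp add: adjoin_top_def)
  then have start: "nerve_map ?P id = ?adjoin (Suc (Suc n))"
    using faces by (intro nerve_map_cong) (auto simp: image_def)
  have "adjoin_top n 0 A = remove_penultimate n 0 A" if "horn_face n A" for A
    using horn_face_finite[OF that] by (simp add: adjoin_top_def remove_penultimate_def)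
  then have finish: "?adjoin 0 = nerve_map ?P ((`) (remove_penultimate n 0))"
    using faces by (intro nerve_map_cong image_cong[OF refl]) auto
  have "nerve_homotopic ?P ((`) (adjoin_top n j)) ((`) (adjoin_top n (Suc j)))" for j
    by (intro nerve_homotopic_images admissible_adjoin_top adjoin_top_comparable)
  then have "homotopic_with (\<lambda>_. True) (nerve_realization ?P (\<le>)) (nerve_realization ?P (\<le>))
      (?adjoin 0) (?adjoin (Suc (Suc n)))"
    by (rule homotopic_with_ladder)
  then show ?thesis
    using start finish by (simp add: homotopic_with_sym)
qed

lemma nerve_homotopic_remove_penultimate_cap:
  assumes n: "2 \<le> n"
  shows "nerve_homotopic {C. straddling_chain n C} ((`) (remove_penultimate n (Suc n))) (\<lambda>_. cap_chain n)"
proof (rule nerve_homotopic_common_upper_bound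
    [where u = "\<lambda>C. remove_penultimate n (Suc n) ` C \<union> cap_chain n"])
  let ?P = "{C. straddling_chain n C}"
  have image: "straddling_chain n (remove_penultimate n (Suc n) ` C)" if "C \<in> ?P" for C
    using straddling_chain_image[OF admissible_remove_penultimate[OF n]] that by simp
  have "straddling_chain n (remove_penultimate n (Suc n) ` C \<union> cap_chain n)" if C: "C \<in> ?P" for C
  proof (rule straddling_chain_Un[OF image[OF C]])
    show "horn_chain n (cap_chain n)"
      using straddling_cap_chain[OF n] by (simp add: straddling_chain_def)
    show "\<forall>A\<in>remove_penultimate n (Suc n) ` C. \<forall>B\<in>cap_chain n. A \<subseteq> B \<or> B \<subseteq> A"
      using C n remove_penultimate_cap_comparable[of n]
      by (auto simp: straddling_chain_def horn_chain_def)
  qed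
  then show "(\<lambda>C. remove_penultimate n (Suc n) ` C \<union> cap_chain n) ` ?P \<subseteq> ?P"
    by auto
  show "(`) (remove_penultimate n (Suc n)) ` ?P \<subseteq> ?P" "(\<lambda>_. cap_chain n) ` ?P \<subseteq> ?P"
    using image straddling_cap_chain[OF n] by auto
qed (auto simp: finite_straddling_chains intro!: mono_onI)

lemma nerve_homotopic_straddling_cap:
  assumes n: "2 \<le> n"
  shows "nerve_homotopic {C. straddling_chain n C} id (\<lambda>_. cap_chain n)"
proof -
  have "nerve_homotopic {C. straddling_chain n C}
      ((`) (remove_penultimate n j)) ((`) (remove_penultimate n (Suc j)))" for j
    by (intro nerve_homotopic_images admissible_remove_penultimate[OF n]
        remove_penultimate_comparable)
  then have "nerve_homotopic {C. straddling_chain n C}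
      ((`) (remove_penultimate n 0)) ((`) (remove_penultimate n (Suc n)))"
    by (rule homotopic_with_ladder)
  with nerve_homotopic_id_remove_penultimate nerve_homotopic_remove_penultimate_cap[OF n]
  show ?thesis
    by (blast intro: homotopic_with_trans)
qed

theorem lemma6p5:
  fixes n :: nat
  assumes "n \<ge> 2"
  shows "weakly_contractible_space
           (nerve_realization
              (pi_inv n {n - 1, n} \<inter> V_plus n (pi_inv n {0..n - 2}))
              (\<subseteq>))"
proof -
  let ?P = "{C. straddling_chain n C}"
  have "contractible_space (nerve_realization ?P (\<le>))"
    using contractible_nerve_realization[OF finite_straddling_chains]
      nerve_homotopic_straddling_cap[OF assms] by blast
  moreover have "(\<lambda>C. if C = cap_chain n then 1 else 0) \<in> topspace (nerve_realization ?P (\<le>))"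
    using vertex_in_nerve_points[of "cap_chain n" ?P] straddling_cap_chain[OF assms]
    by (simp add: topspace_nerve_realization)
  then have "topspace (nerve_realization ?P (\<le>)) \<noteq> {}"
    by blast
  ultimately show ?thesis
    unfolding pi_inv_Int_V_plus_eq by (rule weakly_contractible_if_contractible)
qed

end
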